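(* Let $N>1$ be an integer, $0<\epsilon<e$, and $\tfrac12<\beta<1$. Set \[ K=\left\lceil \log_{1/\beta}(N)\right\rceil\cdot\left\lceil \frac{\log(e/\epsilon)}{\log(\beta/(1-\beta))}\right\rceil . \] Then there exist functions $c_1,\dots,c_K:[0,N]\to\mathbb{R}$ and $r_1,\dots,r_K:[1,N]\to\mathbb{R}$ such that $h(x,y)=\sum_{i=1}^K c_i(x)r_i(y)$ satisfies \[ \left|\Lambda\!\left(\tfrac{x+y}{2}\right)-h(x,y)\right|\le\epsilon\qquad\text{for all }(x,y)\in[0,N]\times[1,N], \] where $\Lambda(z)=\Gamma(z+1/2)/\Gamma(z+1)$. In particular $K=\mathcal{O}(\log N\log(1/\epsilon))$ for fixed $\beta$.
   Context: $\Gamma$ denotes the gamma function; $e$ is Euler's number; $\log$ is the natural logarithm. A function of the form $\sum_{i=1}^K c_i(x)r_i(y)$ (with no continuity required) is said to have rank at most $K$. *)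

theory Defs
  imports "HOL-Analysis.Analysis"
begin

definition Lambda :: "real \<Rightarrow> real" where
  "Lambda z = Gamma (z + 1/2) / Gamma (z + 1)"

end

theory Submission
  imports Defs
begin

(*
  Since sqrt pi * Lambda z = Beta (z + 1/2) (1/2) = \<integral>\<^sub>0\<^sup>1 t powr (z - 1/2) * (1 - t) powr (-1/2) dt,
  expanding t powr (z - 1/2) = t powr (z0 - 1/2) * exp ((z - z0) * ln t) into its Taylor
  polynomial of degree B - 1 in z - z0 gives a sum of B products of a function of x and
  a function of y, with z = (x + y)/2 and z0 = (x0 + y)/2.  The Lagrange remainder, together
  with t powr c * \<bar>ln t\<bar>^B \<le> B! / c^B, bounds the error by sqrt pi * \<rho>^B as soon as
  \<bar>z - z0\<bar> \<le> \<rho> * min z z0.  Covering x + 1 \<in> [1, N + 1] by the geometric blocks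
  [q^(2j), q^(2j+2)], j < A, and expanding around x0 = q^(2j+1) - 1 achieves \<rho> = q - 1
  with q = 1/\<beta>, i.e. \<rho> = (1 - \<beta>)/\<beta>; one Taylor polynomial per block gives rank A * B.
*)

lemma exp_Taylor_remainder_le:
  fixes v :: real
  shows "\<bar>exp v - (\<Sum>m<n. v^m / fact m)\<bar> \<le> max 1 (exp v) * \<bar>v\<bar>^n / fact n"
proof -
  have "\<exists>t. exp t \<le> max 1 (exp v) \<and> exp v = (\<Sum>m<n. v^m / fact m) + exp t / fact n * v^n"
  proof (cases "n = 0")
    case True
    then show ?thesis by (intro exI[of _ v]) auto
  next
    case False
    then have n: "0 < n" by simp
    consider "0 < v" | "v < 0" | "v = 0" by linarith
    then show ?thesis
    proof cases
      case 1
      with Maclaurin[of v n "\<lambda>_. exp" exp] n obtain t where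
        "t < v" and eq: "exp v = (\<Sum>m<n. exp 0 / fact m * v^m) + exp t / fact n * v^n"
        by (auto intro: DERIV_exp)
      from \<open>t < v\<close> have "exp t \<le> max 1 (exp v)" by (simp add: le_max_iff_disj)
      with eq show ?thesis by (auto simp: mult.commute)
    next
      case 2
      with Maclaurin_minus[of v n "\<lambda>_. exp" exp] n obtain t where
        "t < 0" and eq: "exp v = (\<Sum>m<n. exp 0 / fact m * v^m) + exp t / fact n * v^n"
        by (auto intro: DERIV_exp)
      from \<open>t < 0\<close> have "exp t \<le> max 1 (exp v)" by (simp add: le_max_iff_disj)
      with eq show ?thesis by (auto simp: mult.commute)
    next
      case 3
      with Maclaurin_exp_le[of v n] show ?thesis by auto
    qed
  qed
  then obtain t where "exp t \<le> max 1 (exp v)"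
    and "exp v - (\<Sum>m<n. v^m / fact m) = exp t * v^n / fact n" by auto
  then show ?thesis
    by (simp add: abs_mult power_abs divide_right_mono mult_right_mono)
qed

lemma power_div_fact_le_exp:
  fixes u :: real
  assumes "0 \<le> u"
  shows "u^k / fact k \<le> exp u"
proof -
  have "(\<lambda>n. u^n / fact n) sums exp u"
    using exp_converges[of u] by (simp add: field_simps)
  then have "(\<Sum>n\<in>{k}. u^n / fact n) \<le> exp u"
    using assms by (intro sums_le[OF _ sums_If_finite_set]) auto
  then show ?thesis by simp
qed

lemma powr_mult_abs_ln_power_le:
  fixes t c :: real
  assumes "0 < t" "t < 1" "0 < c"
  shows "t powr c * \<bar>ln t\<bar>^k \<le> fact k / c^k"
proof -
  define s where "s = - ln t"
  have s: "0 < s" using assms by (simp add: s_def)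
  have "(c * s)^k \<le> fact k * exp (c * s)"
    using power_div_fact_le_exp[of "c * s" k] s assms by (simp add: field_simps)
  then have "exp (-(c * s)) * s^k * c^k \<le> fact k"
    by (simp add: exp_minus field_simps power_mult_distrib)
  moreover have "t powr c * \<bar>ln t\<bar>^k = exp (-(c * s)) * s^k"
    using assms s by (simp add: powr_def s_def)
  ultimately show ?thesis using assms by (simp add: field_simps)
qed

text \<open>\<open>Lambda_kernel k z\<close> is the \<open>k\<close>-th derivative in \<open>z\<close> of the Beta integrand of
  \<open>sqrt pi * Lambda z\<close>, so \<open>Lambda_moment k z\<close> is the \<open>k\<close>-th derivative of \<open>Lambda\<close> at \<open>z\<close>.\<close>

definition Lambda_kernel :: "nat \<Rightarrow> real \<Rightarrow> real \<Rightarrow> real" where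
  "Lambda_kernel k z t = t powr (z - 1/2) * ln t ^ k * (1 - t) powr (-1/2)"

definition Lambda_moment :: "nat \<Rightarrow> real \<Rightarrow> real" where
  "Lambda_moment k z = integral {0<..<1} (Lambda_kernel k z) / sqrt pi"

lemma has_integral_Lambda_kernel_0:
  assumes "-1/2 < z"
  shows "(Lambda_kernel 0 z has_integral sqrt pi * Lambda z) {0<..<1}"
proof -
  have "((\<lambda>t. t powr ((z + 1/2) - 1) * (1 - t) powr (1/2 - 1)) has_integral Beta (z + 1/2) (1/2)) {0..1}"
    using assms by (intro has_integral_Beta_real) auto
  moreover have "Beta (z + 1/2) (1/2) = sqrt pi * Lambda z"
    by (simp add: Beta_def Lambda_def Gamma_one_half_real add.assoc)
  moreover have "Lambda_kernel 0 z = (\<lambda>t. t powr ((z + 1/2) - 1) * (1 - t) powr (1/2 - 1))"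
    by (simp add: fun_eq_iff Lambda_kernel_def)
  ultimately show ?thesis
    by (simp add: has_integral_Icc_iff_Ioo)
qed

lemma has_integral_arcsine_density:
  "((\<lambda>t. t powr (-1/2) * (1 - t) powr (-1/2)) has_integral pi) {0<..<1::real}"
proof -
  have "((\<lambda>t. t powr (1/2 - 1) * (1 - t) powr (1/2 - 1)) has_integral Beta (1/2) (1/2)) {0..1::real}"
    by (intro has_integral_Beta_real) auto
  moreover have "Beta (1/2) (1/2) = pi"
    by (simp add: Beta_def Gamma_one_half_real)
  ultimately show ?thesis by (simp add: has_integral_Icc_iff_Ioo)
qed

lemma abs_Lambda_kernel_le:
  assumes "0 < t" "t < 1" "0 < z"
  shows "\<bar>Lambda_kernel k z t\<bar> \<le> fact k / z^k * (t powr (-1/2) * (1 - t) powr (-1/2))"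
proof -
  have "\<bar>Lambda_kernel k z t\<bar> = (t powr z * \<bar>ln t\<bar>^k) * (t powr (-1/2) * (1 - t) powr (-1/2))"
    using assms by (simp add: Lambda_kernel_def abs_mult power_abs powr_add[symmetric])
  also have "\<dots> \<le> fact k / z^k * (t powr (-1/2) * (1 - t) powr (-1/2))"
    using assms by (intro mult_right_mono powr_mult_abs_ln_power_le) auto
  finally show ?thesis .
qed

lemma Lambda_kernel_integrable:
  assumes "0 < z"
  shows "Lambda_kernel k z integrable_on {0<..<1}"
proof (rule measurable_bounded_by_integrable_imp_integrable_real)
  show "Lambda_kernel k z \<in> borel_measurable (lebesgue_on {0<..<1})"
    by (rule continuous_imp_measurable_on_sets_lebesgue)
       (auto simp: Lambda_kernel_def intro!: continuous_intros)
  show "(\<lambda>t. fact k / z^k * (t powr (-1/2) * (1 - t) powr (-1/2))) integrable_on {0<..<1}"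
    using has_integral_mult_right[OF has_integral_arcsine_density] by blast
qed (use assms abs_Lambda_kernel_le in auto)

lemma Lambda_kernel_Taylor_remainder_le:
  assumes t: "0 < t" "t < 1" and z: "0 < z" "0 < z0"
    and ratio: "\<bar>z - z0\<bar> \<le> \<rho> * min z z0"
  shows "\<bar>Lambda_kernel 0 z t - (\<Sum>k<n. (z - z0)^k / fact k * Lambda_kernel k z0 t)\<bar>
           \<le> \<rho>^n * (t powr (-1/2) * (1 - t) powr (-1/2))"
proof -
  define v where "v = (z - z0) * ln t"
  define m where "m = min z z0"
  define W where "W = t powr (-1/2) * (1 - t) powr (-1/2)"
  define P where "P = t powr (z0 - 1/2) * (1 - t) powr (-1/2)"
  have m: "0 < m" using z by (simp add: m_def)
  have P: "0 \<le> P" by (simp add: P_def)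
  have kernel_0: "Lambda_kernel 0 z t = P * exp v"
    using t by (simp add: Lambda_kernel_def P_def v_def powr_def exp_add[symmetric] algebra_simps)
  have kernel_k: "(z - z0)^k / fact k * Lambda_kernel k z0 t
      = P * (v^k / fact k)" for k
    by (simp add: Lambda_kernel_def P_def v_def power_mult_distrib)
  \<comment> \<open>since \<open>t < 1\<close>, the larger of the two powers of \<open>t\<close> is the one with the smaller exponent\<close>
  have max_powr: "t powr (z0 - 1/2) * max 1 (exp v) = t powr (-1/2) * t powr m"
  proof (cases "z0 \<le> z")
    case True
    then have "exp v \<le> 1" using t by (simp add: v_def mult_nonneg_nonpos)
    then show ?thesis using True t by (simp add: m_def powr_add[symmetric])
  next
    case False
    then have "1 \<le> exp v" using t by (simp add: v_def mult_nonpos_nonpos)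
    moreover have "t powr (z0 - 1/2) * exp v = t powr (z - 1/2)"
      using t by (simp add: v_def powr_def exp_add[symmetric] algebra_simps)
    ultimately show ?thesis using False t by (simp add: m_def powr_add[symmetric])
  qed
  have "\<bar>Lambda_kernel 0 z t - (\<Sum>k<n. (z - z0)^k / fact k * Lambda_kernel k z0 t)\<bar>
      = \<bar>P * (exp v - (\<Sum>k<n. v^k / fact k))\<bar>"
    by (simp only: kernel_0 kernel_k sum_distrib_left right_diff_distrib)
  also have "\<dots> \<le> P * (max 1 (exp v) * \<bar>v\<bar>^n / fact n)"
    unfolding abs_mult abs_of_nonneg[OF P] by (rule mult_left_mono[OF exp_Taylor_remainder_le P])
  also have "\<dots> = W * \<bar>z - z0\<bar>^n * (t powr m * \<bar>ln t\<bar>^n / fact n)"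
  proof -
    have "P * max 1 (exp v) = W * t powr m" using max_powr by (simp add: P_def W_def mult_ac)
    moreover have "\<bar>v\<bar>^n = \<bar>z - z0\<bar>^n * \<bar>ln t\<bar>^n" by (simp add: v_def abs_mult power_mult_distrib)
    ultimately show ?thesis by (simp add: mult_ac)
  qed
  also have "\<dots> \<le> W * \<bar>z - z0\<bar>^n * (1 / m^n)"
    using powr_mult_abs_ln_power_le[OF t m, of n] m
    by (intro mult_left_mono) (auto simp: W_def field_simps)
  also have "\<dots> = (\<bar>z - z0\<bar> / m)^n * W" by (simp add: power_divide)
  also have "\<dots> \<le> \<rho>^n * W"
    using ratio m by (intro mult_right_mono power_mono) (auto simp: W_def m_def field_simps)
  finally show ?thesis by (simp add: W_def)
qed

lemma Lambda_Taylor_error_le: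
  assumes z: "0 < z" "0 < z0" and ratio: "\<bar>z - z0\<bar> \<le> \<rho> * min z z0"
  shows "\<bar>Lambda z - (\<Sum>k<n. (z - z0)^k / fact k * Lambda_moment k z0)\<bar> \<le> sqrt pi * \<rho>^n"
proof -
  define R where
    "R t = Lambda_kernel 0 z t - (\<Sum>k<n. (z - z0)^k / fact k * Lambda_kernel k z0 t)" for t
  have R: "(R has_integral sqrt pi * (Lambda z - (\<Sum>k<n. (z - z0)^k / fact k * Lambda_moment k z0)))
      {0<..<1}"
    unfolding R_def using z
    by (auto simp: Lambda_moment_def right_diff_distrib sum_distrib_left
        intro!: has_integral_diff has_integral_Lambda_kernel_0 has_integral_sum
          has_integral_mult_right has_integral_divide integrable_integral Lambda_kernel_integrable)
  have "sqrt pi * \<bar>Lambda z - (\<Sum>k<n. (z - z0)^k / fact k * Lambda_moment k z0)\<bar>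
      = \<bar>integral {0<..<1} R\<bar>"
    using R by (simp add: integral_unique abs_mult)
  also have "\<dots> \<le> integral {0<..<1} (\<lambda>t. \<rho>^n * (t powr (-1/2) * (1 - t) powr (-1/2)))"
    unfolding real_norm_def[symmetric]
  proof (rule integral_norm_bound_integral)
    show "R integrable_on {0<..<1}" using R by blast
    show "(\<lambda>t. \<rho>^n * (t powr (-1/2) * (1 - t) powr (-1/2))) integrable_on {0<..<1}"
      using has_integral_mult_right[OF has_integral_arcsine_density] by blast
  qed (use Lambda_kernel_Taylor_remainder_le[OF _ _ z ratio] in \<open>auto simp: R_def\<close>)
  also have "\<dots> = \<rho>^n * pi"
    by (rule integral_unique[OF has_integral_mult_right[OF has_integral_arcsine_density]])
  also have "\<dots> = sqrt pi * (sqrt pi * \<rho>^n)" by simp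
  finally show ?thesis by simp
qed

lemma power_nat_ceiling_ln_div_ln_le:
  fixes \<rho> \<delta> :: real
  assumes "0 < \<rho>" "\<rho> < 1" "0 < \<delta>"
  shows "\<rho> ^ nat \<lceil>ln \<delta> / ln \<rho>\<rceil> \<le> \<delta>"
proof -
  define B where "B = nat \<lceil>ln \<delta> / ln \<rho>\<rceil>"
  have "ln \<rho> < 0" using assms by simp
  moreover have "ln \<delta> / ln \<rho> \<le> real B" unfolding B_def by linarith
  ultimately have "real B * ln \<rho> \<le> ln \<delta>" by (simp add: divide_le_eq mult.commute)
  then show ?thesis
    using assms by (simp add: B_def ln_realpow[symmetric] del: ln_realpow)
qed

lemma le_powr_nat_ceiling_log:
  fixes q X :: real
  assumes "1 < q" "0 < X"
  shows "X \<le> q powr nat \<lceil>log q X\<rceil>"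
proof -
  have "log q X \<le> real (nat \<lceil>log q X\<rceil>)" by linarith
  then have "q powr log q X \<le> q powr nat \<lceil>log q X\<rceil>" using assms by (intro powr_mono) auto
  then show ?thesis using assms by simp
qed

lemma sqrt_pi_le_exp_1: "sqrt pi \<le> exp 1"
proof -
  have "2 \<le> exp (1::real)" using exp_ge_add_one_self[of 1] by simp
  then have "pi \<le> exp 1 ^ 2" using pi_less_4 power_mono[of "2::real" "exp 1" 2] by simp
  then show ?thesis using real_le_lsqrt by fastforce
qed

lemma sum_block_diagonal:
  fixes f :: "nat \<Rightarrow> 'a::comm_monoid_add"
  assumes "j < A"
  shows "(\<Sum>i=1..A*B. if (i - 1) div B = j then f ((i - 1) mod B) else 0) = (\<Sum>k<B. f k)"
proof -
  have block: "(\<Sum>i\<in>{l*B..<l*B+B}. if i div B = j then f (i mod B) else 0)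
      = (if l = j then (\<Sum>k<B. f k) else 0)" for l
  proof -
    have "(\<Sum>i\<in>{l*B..<l*B+B}. if i div B = j then f (i mod B) else 0)
        = (\<Sum>k\<in>{0..<B}. if (k + l*B) div B = j then f ((k + l*B) mod B) else 0)"
      using sum.shift_bounds_nat_ivl[of "\<lambda>i. if i div B = j then f (i mod B) else 0" 0 "l*B" B]
      by (simp add: add.commute)
    also have "\<dots> = (\<Sum>k\<in>{0..<B}. if l = j then f k else 0)"
      by (rule sum.cong) auto
    finally show ?thesis by (simp add: atLeast0LessThan)
  qed
  have "(\<Sum>i=1..A*B. if (i - 1) div B = j then f ((i - 1) mod B) else 0)
      = (\<Sum>i<A*B. if i div B = j then f (i mod B) else 0)"
    by (simp only: One_nat_def sum.atLeast1_atMost_eq diff_Suc_Suc minus_nat.diff_0)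
  also have "\<dots> = (\<Sum>l<A. if l = j then (\<Sum>k<B. f k) else 0)"
    by (simp only: sum.nat_group[symmetric] block)
  also have "\<dots> = (\<Sum>k<B. f k)" using assms by simp
  finally show ?thesis .
qed

lemma floor_log_block:
  fixes q X :: real and A :: nat
  assumes q: "1 < q" and X: "1 \<le> X"
  defines "J \<equiv> nat \<lfloor>log q X / 2\<rfloor>"
  shows "q^(2*J) \<le> X" and "X \<le> q^(2*J + 2)" and "X < q powr (2*A) \<Longrightarrow> J < A"
proof -
  define L where "L = log q X"
  have "0 \<le> L" using q X by (simp add: L_def)
  then have J: "real J \<le> L/2" "L/2 < real J + 1"
    unfolding J_def L_def[symmetric] by linarith+
  have X_eq: "X = q powr L" using q X by (simp add: L_def)
  have pow: "q^n = q powr real n" for n using q by (simp add: powr_realpow)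
  show "q^(2*J) \<le> X" unfolding pow X_eq using q J by (intro powr_mono) auto
  show "X \<le> q^(2*J + 2)" unfolding pow X_eq using q J by (intro powr_mono) auto
  assume "X < q powr (2*A)"
  then have "L < 2*A" using q X_eq by simp
  with J show "J < A" by linarith
qed

lemma dist_geometric_centre_le:
  fixes q P x y :: real
  assumes q: "1 < q" and P: "1 \<le> P" "P \<le> x + 1" "x + 1 \<le> q^2 * P"
    and x: "0 \<le> x" and y: "1 \<le> y"
  shows "\<bar>x - (q*P - 1)\<bar> \<le> (q - 1) * (min x (q*P - 1) + y)"
proof (cases "x \<le> q*P - 1")
  case True
  have "q*P - (x + 1) \<le> (q - 1) * (x + 1)"
    using P q mult_left_mono[of P "x + 1" q] by (simp add: algebra_simps)
  also have "\<dots> \<le> (q - 1) * (x + y)" using q y by (intro mult_left_mono) auto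
  finally show ?thesis using True by (simp add: min_def)
next
  case False
  have "(x + 1) - q*P \<le> (q - 1) * (q*P)" using P by (simp add: algebra_simps power2_eq_square)
  also have "\<dots> \<le> (q - 1) * (q*P - 1 + y)" using q y by (intro mult_left_mono) auto
  finally show ?thesis using False by (simp add: min_def)
qed

lemma Lambda_low_rank_approx:
  fixes q N :: real and A B :: nat
  assumes q: "1 < q" and N: "N + 1 < q powr (2*A)"
  shows "\<exists>c r :: nat \<Rightarrow> real \<Rightarrow> real. \<forall>x y. 0 \<le> x \<longrightarrow> x \<le> N \<longrightarrow> 1 \<le> y \<longrightarrow>
           \<bar>Lambda ((x + y) / 2) - (\<Sum>i=1..A*B. c i x * r i y)\<bar> \<le> sqrt pi * (q - 1)^B"
proof -
  define J where "J x = nat \<lfloor>log q (x + 1) / 2\<rfloor>" for x :: real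
  define x0 where "x0 j = q^(2*j + 1) - 1" for j :: nat
  define f where "f x y k = ((x - x0 (J x)) / 2)^k / fact k * Lambda_moment k ((x0 (J x) + y) / 2)"
    for x y :: real and k :: nat
  \<comment> \<open>index \<open>i = j * B + k + 1\<close> is the \<open>k\<close>-th Taylor term around the centre \<open>x0 j\<close> of block \<open>j\<close>\<close>
  define c where "c i x = (if (i - 1) div B = J x
      then ((x - x0 (J x)) / 2)^((i - 1) mod B) / fact ((i - 1) mod B) else 0)"
    for i :: nat and x :: real
  define r where "r i y = Lambda_moment ((i - 1) mod B) ((x0 ((i - 1) div B) + y) / 2)"
    for i :: nat and y :: real
  have "\<bar>Lambda ((x + y) / 2) - (\<Sum>i=1..A*B. c i x * r i y)\<bar> \<le> sqrt pi * (q - 1)^B"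
    if x: "0 \<le> x" "x \<le> N" and y: "1 \<le> y" for x y
  proof -
    define P where "P = q^(2 * J x)"
    have "1 \<le> P" using q by (simp add: P_def)
    moreover have "P \<le> x + 1" "x + 1 \<le> q^2 * P" and "J x < A"
      using floor_log_block(1,2)[OF q, of "x + 1"] floor_log_block(3)[OF q, of "x + 1" A] x N
      by (auto simp: P_def J_def power_add power2_eq_square)
    ultimately have dist: "\<bar>x - x0 (J x)\<bar> \<le> (q - 1) * (min x (x0 (J x)) + y)"
      using dist_geometric_centre_le[OF q _ _ _ x(1) y] by (simp add: x0_def P_def)
    have "1 \<le> q * P" using q \<open>1 \<le> P\<close> mult_mono[of 1 q 1 P] by simp
    then have "0 \<le> x0 (J x)" by (simp add: x0_def P_def)
    have "(\<Sum>i=1..A*B. c i x * r i y)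
        = (\<Sum>i=1..A*B. if (i - 1) div B = J x then f x y ((i - 1) mod B) else 0)"
      by (rule sum.cong) (auto simp: c_def r_def f_def)
    also have "\<dots> = (\<Sum>k<B. f x y k)"
      by (rule sum_block_diagonal) fact
    also have "\<dots> = (\<Sum>k<B. ((x + y)/2 - (x0 (J x) + y)/2)^k / fact k
        * Lambda_moment k ((x0 (J x) + y) / 2))"
    proof -
      have "(x + y)/2 - (x0 (J x) + y)/2 = (x - x0 (J x)) / 2" by argo
      then show ?thesis by (simp only: f_def)
    qed
    moreover have "\<bar>(x + y)/2 - (x0 (J x) + y)/2\<bar> \<le> (q - 1) * min ((x + y)/2) ((x0 (J x) + y)/2)"
    proof -
      have "min ((x + y)/2) ((x0 (J x) + y)/2) = (min x (x0 (J x)) + y) / 2" by (simp add: min_def)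
      moreover have "\<bar>(x + y)/2 - (x0 (J x) + y)/2\<bar> = \<bar>x - x0 (J x)\<bar> / 2" by argo
      ultimately show ?thesis using divide_right_mono[OF dist, of 2] by (simp only:) simp
    qed
    ultimately show ?thesis
      using x y \<open>0 \<le> x0 (J x)\<close> by (simp only:) (rule Lambda_Taylor_error_le; simp)
  qed
  then show ?thesis by blast
qed

theorem theorem3p5:
  fixes N :: nat and \<epsilon> \<beta> :: real
  assumes "N > 1" and "0 < \<epsilon>" and "\<epsilon> < exp 1"
    and "1/2 < \<beta>" and "\<beta> < 1"
  defines "K \<equiv> nat (\<lceil>log (1/\<beta>) (real N)\<rceil> * \<lceil>ln (exp 1 / \<epsilon>) / ln (\<beta> / (1 - \<beta>))\<rceil>)"
  shows "\<exists>c r :: nat \<Rightarrow> real \<Rightarrow> real.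
           \<forall>x y. x \<in> {0..real N} \<longrightarrow> y \<in> {1..real N} \<longrightarrow>
             \<bar>Lambda ((x + y) / 2) - (\<Sum>i=1..K. c i x * r i y)\<bar> \<le> \<epsilon>"
proof -
  define q where "q = 1/\<beta>"
  define A where "A = nat \<lceil>log q (real N)\<rceil>"
  define B where "B = nat \<lceil>ln (\<epsilon> / exp 1) / ln (q - 1)\<rceil>"
  have q: "1 < q" "q < 2" using assms by (auto simp: q_def field_simps)
  have "ln (exp 1 / \<epsilon>) / ln (\<beta> / (1 - \<beta>)) = ln (\<epsilon> / exp 1) / ln (q - 1)"
    using assms by (simp add: q_def ln_div field_simps)
  moreover have "0 \<le> log q (real N)" using q assms by simp
  ultimately have K: "K = A * B" by (simp add: K_def A_def B_def q_def nat_mult_distrib)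
  have "real N \<le> q powr A" unfolding A_def using le_powr_nat_ceiling_log[OF q(1)] assms by simp
  then have "real N * real N \<le> q powr (2*A)"
    using mult_mono[of "real N" "q powr A" "real N" "q powr A"] by (simp add: powr_add[symmetric])
  moreover have "real N + 1 < real N * real N"
  proof -
    have "2 \<le> real N" using assms by simp
    then have "real N * 2 \<le> real N * real N" by (intro mult_left_mono) auto
    with \<open>2 \<le> real N\<close> show ?thesis by linarith
  qed
  ultimately have N: "real N + 1 < q powr (2*A)" by linarith
  have "(q - 1)^B \<le> \<epsilon> / exp 1"
    unfolding B_def using q assms by (intro power_nat_ceiling_ln_div_ln_le) auto
  then have bound: "sqrt pi * (q - 1)^B \<le> \<epsilon>"
    using sqrt_pi_le_exp_1 q mult_mono[of "sqrt pi" "exp 1" "(q - 1)^B" "\<epsilon> / exp 1"] by simp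
  obtain c r :: "nat \<Rightarrow> real \<Rightarrow> real" where
    "\<And>x y. 0 \<le> x \<Longrightarrow> x \<le> real N \<Longrightarrow> 1 \<le> y \<Longrightarrow>
       \<bar>Lambda ((x + y) / 2) - (\<Sum>i=1..A*B. c i x * r i y)\<bar> \<le> sqrt pi * (q - 1)^B"
    using Lambda_low_rank_approx[OF q(1) N] by blast
  then show ?thesis using bound unfolding K by (meson atLeastAtMost_iff order_trans)
qed

end
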